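(* Let $(z_j)_{j\ge1}$ be a sequence of distinct points of the open unit disc $U$ with $\sum_{j=1}^\infty(1-|z_j|)=\infty$. Then there exists a sequence of positive numbers $(\eta_j)$ with $\lim_{j\to\infty}\eta_j=0$ such that for every bounded analytic function $f$ on $U$ that is not identically zero, \[ \limsup_{j\to\infty}\frac{|f(z_j)|}{\eta_j}=\infty . \] *)

theory Defs
  imports "HOL-Complex_Analysis.Complex_Analysis" "HOL-Library.Liminf_Limsup"
begin

end

(* Cut the sequence into consecutive blocks B_n with sum over j in B_n of (1 - |z_j|) at least n.
   For a finite set Z in the disc and a in Z let delta_a be the product of |phi_b(a)| over
   b in Z - {a}, where phi_b is the Moebius map vanishing at b.  If |f| <= M on the disc, then f
   minus its Blaschke-Lagrange interpolant on Z vanishes on Z, and dividing out one Moebius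
   factor at a time (Schwarz's lemma) gives |f(w)| <= (M + E) B_Z(w) + E, where B_Z is the modulus
   of the Blaschke product with zero set Z and E is the sum of |f(a)| / delta_a over a in Z.
   At a fixed w the Blaschke product of the n-th block is at most exp(-c n).  With
   eta_j = delta_j / ((n + 1) |B_n|) for j in B_n, a bound |f(z_j)| <= C eta_j gives E <= C / (n + 1)
   on the n-th block, hence f(w) = 0. *)

theory Submission
  imports Defs
begin

section \<open>Moebius maps of the unit disc\<close>

abbreviation moebius :: "complex \<Rightarrow> complex \<Rightarrow> complex" where
  "moebius a \<equiv> Moebius_function 0 a"

lemma moebius_denominator_nonzero:
  assumes "norm a < 1" "norm z < 1"
  shows "1 - cnj a * z \<noteq> 0"
proof -
  have "norm (cnj a * z) < 1"
    using norm_mult_less[of "cnj a" 1 z 1] assms by simp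
  then show ?thesis by auto
qed

lemma moebius_eq_0_iff:
  assumes "norm a < 1" "norm z < 1"
  shows "moebius a z = 0 \<longleftrightarrow> z = a"
  using moebius_denominator_nonzero[OF assms] by (simp add: Moebius_function_simple)

lemma one_minus_norm_moebius_squared:
  assumes "norm a < 1" "norm z < 1"
  shows "1 - norm (moebius a z) ^ 2 =
    (1 - norm a ^ 2) / norm (1 - cnj a * z) ^ 2 * (1 - norm z ^ 2)"
proof -
  have "1 - a * cnj z \<noteq> 0"
    using moebius_denominator_nonzero[OF assms]
    by (metis complex_cnj_cnj complex_cnj_mult complex_cnj_one right_minus_eq)
  then show ?thesis
    apply (cases a, cases z)
    apply (simp add: Moebius_function_def divide_simps norm_divide norm_mult)
    apply (simp add: complex_norm complex_diff complex_mult one_complex.code complex_cnj)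
    apply (auto simp: algebra_simps power2_eq_square)
    done
qed

lemma norm_moebius_le_exp:
  assumes "norm a < 1" "norm w < 1"
  shows "norm (moebius a w) \<le> exp (- ((1 - norm a) * (1 - norm w) / 8))"
proof -
  define x where "x = (1 - norm a) * (1 - norm w) / 4"
  have "norm (1 - cnj a * w) \<le> 1 + norm (cnj a * w)"
    using norm_triangle_ineq4[of 1 "cnj a * w"] by simp
  also have "norm (cnj a * w) \<le> 1"
    using assms by (simp add: norm_mult mult_le_one)
  finally have "norm (1 - cnj a * w) ^ 2 \<le> 2 ^ 2"
    by (intro power_mono) auto
  moreover have "1 - norm a \<le> 1 - norm a ^ 2" "1 - norm w \<le> 1 - norm w ^ 2"
    using assms by (simp_all add: power2_eq_square mult_left_le_one_le)
  moreover have "norm (1 - cnj a * w) > 0"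
    using moebius_denominator_nonzero[OF assms] by simp
  ultimately have "(1 - norm a) / 4 * (1 - norm w)
      \<le> (1 - norm a ^ 2) / norm (1 - cnj a * w) ^ 2 * (1 - norm w ^ 2)"
    using assms by (intro mult_mono frac_le) auto
  then have "x \<le> (1 - norm a ^ 2) / norm (1 - cnj a * w) ^ 2 * (1 - norm w ^ 2)"
    by (simp add: x_def)
  then have "norm (moebius a w) ^ 2 \<le> 1 - x"
    using one_minus_norm_moebius_squared[OF assms] by linarith
  also have "\<dots> \<le> exp (- x)"
    using exp_ge_add_one_self[of "- x"] by simp
  also have "\<dots> = exp (- x / 2) ^ 2"
    by (simp flip: exp_add exp_double add: power2_eq_square)
  finally have "norm (moebius a w) \<le> exp (- x / 2)"
    by (rule power2_le_imp_le) simp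
  then show ?thesis by (simp add: x_def)
qed

lemma norm_le_moebius_if_zero:
  assumes holg: "g holomorphic_on ball 0 1"
    and bound: "\<And>u. u \<in> ball 0 1 \<Longrightarrow> norm (g u) \<le> M"
    and a: "a \<in> ball 0 1" and "g a = 0" and z: "z \<in> ball 0 1"
  shows "norm (g z) \<le> M * norm (moebius a z)"
proof (rule field_le_epsilon)
  \<comment> \<open>Schwarz's lemma for \<open>g \<circ> moebius (- a)\<close>, scaled by \<open>M + e\<close> to make it map into the open disc.\<close>
  fix e :: real assume "0 < e"
  have "0 \<le> M" using bound[OF a] by (meson norm_ge_zero order_trans)
  with \<open>0 < e\<close> have Me: "M + e > 0" by simp
  define c :: complex where "c = of_real (M + e)"
  have norm_c: "norm c = M + e"
    using Me by (simp add: c_def del: of_real_add)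
  define F where "F u = g (moebius (- a) u) / c" for u
  have moebius_in_ball: "moebius b u \<in> ball 0 1" if "b \<in> ball 0 1" "u \<in> ball 0 1" for b u
    using Moebius_function_norm_lt_1 that by simp
  have "(g \<circ> moebius (- a)) holomorphic_on ball 0 1"
    using a moebius_in_ball[of "- a"]
    by (intro holomorphic_on_compose_gen[OF Moebius_function_holomorphic holg]) auto
  then have "F holomorphic_on ball 0 1"
    unfolding F_def o_def using norm_c Me by (intro holomorphic_intros) auto
  moreover have "F 0 = 0"
    by (simp add: F_def Moebius_function_of_zero \<open>g a = 0\<close>)
  moreover have "norm (F u) < 1" if "norm u < 1" for u
    using bound[OF moebius_in_ball[of "- a" u]] a that \<open>0 < e\<close> Me
    by (simp add: F_def norm_divide norm_c divide_less_eq)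
  moreover have "norm (moebius a z) < 1"
    using moebius_in_ball[OF a z] by simp
  ultimately have "norm (F (moebius a z)) \<le> norm (moebius a z)"
    by (rule Schwarz_Lemma(1))
  moreover have "F (moebius a z) = g z / c"
    using Moebius_function_compose[of "- a" a z] a z by (simp add: F_def)
  ultimately have "norm (g z) \<le> (M + e) * norm (moebius a z)"
    using Me by (simp add: norm_divide divide_le_eq mult.commute norm_c)
  also have "\<dots> \<le> M * norm (moebius a z) + e"
    using \<open>norm (moebius a z) < 1\<close> \<open>0 < e\<close> by (simp add: algebra_simps)
  finally show "norm (g z) \<le> M * norm (moebius a z) + e" .
qed

lemma holomorphic_factor_moebius:
  assumes holg: "g holomorphic_on ball 0 1"
    and bound: "\<And>u. u \<in> ball 0 1 \<Longrightarrow> norm (g u) \<le> M"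
    and a: "a \<in> ball 0 1" and ga: "g a = 0"
  obtains h where "h holomorphic_on ball 0 1" "\<And>u. u \<in> ball 0 1 \<Longrightarrow> norm (h u) \<le> M"
    "\<And>u. u \<in> ball 0 1 \<Longrightarrow> g u = moebius a u * h u"
proof -
  define G where "G u = (if u = a then deriv g a else (g u - g a) / (u - a))" for u
  define h where "h u = G u * (1 - cnj a * u)" for u
  have "G holomorphic_on ball 0 1"
    unfolding G_def using a by (intro pole_lemma[OF holg]) auto
  then have holh: "h holomorphic_on ball 0 1"
    unfolding h_def by (intro holomorphic_intros)
  have factor: "g u = moebius a u * h u" if "u \<in> ball 0 1" for u
    using ga moebius_denominator_nonzero[of a u] a that
    by (cases "u = a") (simp_all add: Moebius_function_simple h_def G_def)
  have bound_off_a: "norm (h u) \<le> M" if "u \<in> ball 0 1" "u \<noteq> a" for u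
  proof -
    have "norm (moebius a u) > 0"
      using moebius_eq_0_iff[of a u] a that by simp
    moreover have "norm (moebius a u) * norm (h u) \<le> norm (moebius a u) * M"
      using norm_le_moebius_if_zero[OF holg bound a ga that(1)] factor[OF that(1)]
      by (simp add: norm_mult mult.commute)
    ultimately show ?thesis by simp
  qed
  have "norm (h u) \<le> M" if u: "u \<in> ball 0 1" for u
  proof (cases "u = a")
    case True
    have "(h \<longlongrightarrow> h a) (at a)"
      using holh a
      by (meson holomorphic_on_imp_continuous_on continuous_on_eq_continuous_at open_ball isCont_def)
    moreover have "eventually (\<lambda>v. v \<in> ball 0 1 - {a}) (at a)"
      using a by (intro eventually_at_in_open) auto
    then have "eventually (\<lambda>v. norm (h v) \<le> M) (at a)"
      by eventually_elim (use bound_off_a in auto)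
    ultimately have "norm (h a) \<le> M"
      by (intro tendsto_le[OF at_neq_bot tendsto_const tendsto_norm])
    then show ?thesis using True by simp
  qed (use bound_off_a u in auto)
  with holh factor show ?thesis
    by (intro that) auto
qed

section \<open>Finite Blaschke products and interpolation\<close>

definition Blaschke_modulus :: "complex set \<Rightarrow> complex \<Rightarrow> real" where
  "Blaschke_modulus Z u = (\<Prod>a\<in>Z. norm (moebius a u))"

lemma Blaschke_modulus_nonneg: "Blaschke_modulus Z u \<ge> 0"
  by (simp add: Blaschke_modulus_def prod_nonneg)

lemma Blaschke_modulus_le_1:
  assumes "Z \<subseteq> ball 0 1" "u \<in> ball 0 1"
  shows "Blaschke_modulus Z u \<le> 1"
  unfolding Blaschke_modulus_def
  by (intro prod_le_1 conjI norm_ge_zero less_imp_le Moebius_function_norm_lt_1) (use assms in auto)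

lemma Blaschke_modulus_pos:
  assumes "finite Z" "Z \<subseteq> ball 0 1" "u \<in> ball 0 1" "u \<notin> Z"
  shows "Blaschke_modulus Z u > 0"
  unfolding Blaschke_modulus_def
  using assms moebius_eq_0_iff by (intro prod_pos) force

lemma Blaschke_modulus_le_exp:
  assumes "Z \<subseteq> ball 0 1" "w \<in> ball 0 1"
  shows "Blaschke_modulus Z w \<le> exp (- ((1 - norm w) / 8) * (\<Sum>a\<in>Z. 1 - norm a))"
proof -
  have "Blaschke_modulus Z w \<le> (\<Prod>a\<in>Z. exp (- ((1 - norm a) * (1 - norm w) / 8)))"
    unfolding Blaschke_modulus_def
    using assms norm_moebius_le_exp by (intro prod_mono) auto
  also have "\<dots> = exp (- ((1 - norm w) / 8) * (\<Sum>a\<in>Z. 1 - norm a))"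
    by (cases "finite Z")
      (simp_all add: exp_sum[symmetric] sum_distrib_left sum_negf mult.commute)
  finally show ?thesis .
qed

lemma norm_le_Blaschke_modulus:
  assumes "finite Z" "Z \<subseteq> ball 0 1" "g holomorphic_on ball 0 1"
    "\<And>u. u \<in> ball 0 1 \<Longrightarrow> norm (g u) \<le> M" "\<And>a. a \<in> Z \<Longrightarrow> g a = 0" "w \<in> ball 0 1"
  shows "norm (g w) \<le> M * Blaschke_modulus Z w"
  using assms
proof (induction Z arbitrary: g rule: finite_induct)
  case empty
  then show ?case by (simp add: Blaschke_modulus_def)
next
  case (insert a Z)
  obtain h where holh: "h holomorphic_on ball 0 1" and bound: "\<And>u. u \<in> ball 0 1 \<Longrightarrow> norm (h u) \<le> M"
    and factor: "\<And>u. u \<in> ball 0 1 \<Longrightarrow> g u = moebius a u * h u"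
    using holomorphic_factor_moebius[of g M a] insert.prems by auto
  have "h b = 0" if "b \<in> Z" for b
    using factor[of b] insert.prems insert.hyps(2) that moebius_eq_0_iff[of a b] by auto
  then have "norm (h w) \<le> M * Blaschke_modulus Z w"
    using insert.IH[OF _ holh bound] insert.prems by auto
  then have "norm (moebius a w) * norm (h w) \<le> norm (moebius a w) * (M * Blaschke_modulus Z w)"
    by (rule mult_left_mono) simp
  then show ?case
    using factor[of w] insert.prems insert.hyps
    by (simp add: Blaschke_modulus_def norm_mult mult_ac)
qed

definition Blaschke_Lagrange :: "complex set \<Rightarrow> complex \<Rightarrow> complex \<Rightarrow> complex" where
  "Blaschke_Lagrange Z a u = (\<Prod>b\<in>Z-{a}. moebius b u) / (\<Prod>b\<in>Z-{a}. moebius b a)"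

context
  fixes Z :: "complex set"
  assumes finite: "finite Z" and in_disc: "Z \<subseteq> ball 0 1"
begin

lemma holomorphic_Blaschke_Lagrange: "Blaschke_Lagrange Z a holomorphic_on ball 0 1"
  unfolding Blaschke_Lagrange_def
  using in_disc by (intro holomorphic_intros Moebius_function_holomorphic) auto

lemma Blaschke_Lagrange_same:
  assumes "a \<in> Z"
  shows "Blaschke_Lagrange Z a a = 1"
proof -
  have "Blaschke_modulus (Z - {a}) a \<noteq> 0"
    using Blaschke_modulus_pos[of "Z - {a}" a] finite in_disc assms by fastforce
  then have "(\<Prod>b\<in>Z-{a}. moebius b a) \<noteq> 0"
    unfolding Blaschke_modulus_def prod_norm by simp
  then show ?thesis
    by (simp add: Blaschke_Lagrange_def)
qed

lemma Blaschke_Lagrange_other: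
  assumes "b \<in> Z" "b \<noteq> a"
  shows "Blaschke_Lagrange Z a b = 0"
  unfolding Blaschke_Lagrange_def
  using assms finite by (auto intro!: prod_zero bexI[of _ b] simp: Moebius_function_eq_zero)

lemma norm_Blaschke_Lagrange_le:
  assumes "u \<in> ball 0 1"
  shows "norm (Blaschke_Lagrange Z a u) \<le> 1 / Blaschke_modulus (Z - {a}) a"
proof -
  have "norm (Blaschke_Lagrange Z a u) = Blaschke_modulus (Z - {a}) u / Blaschke_modulus (Z - {a}) a"
    by (simp add: Blaschke_Lagrange_def Blaschke_modulus_def norm_divide prod_norm)
  also have "\<dots> \<le> 1 / Blaschke_modulus (Z - {a}) a"
    using Blaschke_modulus_le_1[of "Z - {a}" u] in_disc assms
    by (intro divide_right_mono Blaschke_modulus_nonneg) auto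
  finally show ?thesis .
qed

lemma norm_le_Blaschke_interpolation:
  assumes holf: "f holomorphic_on ball 0 1"
    and bound: "\<And>u. u \<in> ball 0 1 \<Longrightarrow> norm (f u) \<le> M" and w: "w \<in> ball 0 1"
  defines "E \<equiv> (\<Sum>a\<in>Z. norm (f a) / Blaschke_modulus (Z - {a}) a)"
  shows "norm (f w) \<le> (M + E) * Blaschke_modulus Z w + E"
proof -
  define p where "p u = (\<Sum>a\<in>Z. f a * Blaschke_Lagrange Z a u)" for u
  have norm_p: "norm (p u) \<le> E" if "u \<in> ball 0 1" for u
  proof -
    have "norm (p u) \<le> (\<Sum>a\<in>Z. norm (f a) * norm (Blaschke_Lagrange Z a u))"
      unfolding p_def by (rule norm_sum[THEN order_trans]) (simp add: norm_mult)
    also have "\<dots> \<le> E"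
      unfolding E_def
      by (intro sum_mono) (use mult_left_mono[OF norm_Blaschke_Lagrange_le[OF that] norm_ge_zero] in simp)
    finally show ?thesis .
  qed
  have p_interpolates: "p a = f a" if "a \<in> Z" for a
  proof -
    have "p a = f a * Blaschke_Lagrange Z a a + (\<Sum>b\<in>Z-{a}. f b * Blaschke_Lagrange Z b a)"
      unfolding p_def using finite that by (simp add: sum.remove)
    moreover have "(\<Sum>b\<in>Z-{a}. f b * Blaschke_Lagrange Z b a) = 0"
      using Blaschke_Lagrange_other[OF that] by (intro sum.neutral) auto
    ultimately show ?thesis
      using that by (simp add: Blaschke_Lagrange_same)
  qed
  have "norm (f w - p w) \<le> (M + E) * Blaschke_modulus Z w"
  proof (rule norm_le_Blaschke_modulus[OF finite in_disc _ _ _ w])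
    show "(\<lambda>u. f u - p u) holomorphic_on ball 0 1"
      unfolding p_def by (intro holomorphic_intros holf holomorphic_Blaschke_Lagrange)
    show "norm (f u - p u) \<le> M + E" if "u \<in> ball 0 1" for u
      using norm_triangle_ineq4[of "f u" "p u"] bound[OF that] norm_p[OF that] by linarith
  qed (simp add: p_interpolates)
  then show ?thesis
    using norm_triangle_ineq[of "f w - p w" "p w"] norm_p[OF w] by simp
qed

end

lemma bounded_holomorphic_eq_0_if_small_on_sets:
  fixes Z :: "nat \<Rightarrow> complex set"
  assumes finite: "\<And>n. finite (Z n)" and in_disc: "\<And>n. Z n \<subseteq> ball 0 1"
    and mass: "filterlim (\<lambda>n. \<Sum>a\<in>Z n. 1 - norm a) at_top sequentially"
    and small: "(\<lambda>n. \<Sum>a\<in>Z n. norm (f a) / Blaschke_modulus (Z n - {a}) a) \<longlonglongrightarrow> 0"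
    and holf: "f holomorphic_on ball 0 1"
    and bound: "\<And>u. u \<in> ball 0 1 \<Longrightarrow> norm (f u) \<le> M" and w: "w \<in> ball 0 1"
  shows "f w = 0"
proof -
  define E where "E n = (\<Sum>a\<in>Z n. norm (f a) / Blaschke_modulus (Z n - {a}) a)" for n
  define c where "c = (1 - norm w) / 8"
  have "c > 0" using w by (simp add: c_def)
  have exp_lim: "(\<lambda>n. exp (c * - (\<Sum>a\<in>Z n. 1 - norm a))) \<longlonglongrightarrow> 0"
    using mass \<open>c > 0\<close>
    by (intro filterlim_compose[OF exp_at_bot] filterlim_tendsto_pos_mult_at_bot[OF tendsto_const])
      (simp_all add: filterlim_uminus_at_top[symmetric])
  have exp_bound: "Blaschke_modulus (Z n) w \<le> exp (c * - (\<Sum>a\<in>Z n. 1 - norm a))" for n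
    using Blaschke_modulus_le_exp[OF in_disc w] by (simp add: c_def)
  have "(\<lambda>n. Blaschke_modulus (Z n) w) \<longlonglongrightarrow> 0"
    by (rule real_tendsto_sandwich[OF always_eventually always_eventually tendsto_const exp_lim])
      (use exp_bound Blaschke_modulus_nonneg in auto)
  then have "(\<lambda>n. (M + E n) * Blaschke_modulus (Z n) w + E n) \<longlonglongrightarrow> (M + 0) * 0 + 0"
    unfolding E_def by (intro tendsto_add tendsto_mult tendsto_const small)
  moreover have "norm (f w) \<le> (M + E n) * Blaschke_modulus (Z n) w + E n" for n
    unfolding E_def by (rule norm_le_Blaschke_interpolation[OF finite in_disc holf bound w])
  ultimately have "norm (f w) \<le> 0"
    by (intro tendsto_lowerbound[OF _ always_eventually sequentially_bot]) auto
  then show ?thesis by simp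
qed

lemma interpolation_sum_le_if_bounded_by_weights:
  fixes s :: real
  assumes "finite Z" "Z \<noteq> {}" "Z \<subseteq> ball 0 1" "s > 0"
    and small: "\<And>a. a \<in> Z \<Longrightarrow> norm (f a) \<le> C * (Blaschke_modulus (Z - {a}) a / (s * card Z))"
  shows "(\<Sum>a\<in>Z. norm (f a) / Blaschke_modulus (Z - {a}) a) \<le> C / s"
proof -
  have pos: "Blaschke_modulus (Z - {a}) a > 0" if "a \<in> Z" for a
    using Blaschke_modulus_pos[of "Z - {a}" a] assms that by fastforce
  have "(\<Sum>a\<in>Z. norm (f a) / Blaschke_modulus (Z - {a}) a) \<le> (\<Sum>a\<in>Z. C / (s * card Z))"
  proof (rule sum_mono)
    fix a assume "a \<in> Z"
    then show "norm (f a) / Blaschke_modulus (Z - {a}) a \<le> C / (s * card Z)"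
      using small[of a] pos[of a] by (simp add: divide_le_eq)
  qed
  also have "\<dots> = C / s"
    using assms by (simp add: card_gt_0_iff)
  finally show ?thesis .
qed

section \<open>Blocks of a divergent series\<close>

lemma not_summable_tail_sums_unbounded:
  fixes d :: "nat \<Rightarrow> real"
  assumes nonneg: "\<And>j. d j \<ge> 0" and "\<not> summable d"
  shows "\<exists>b>a. r \<le> (\<Sum>j\<in>{a..<b}. d j)"
proof (rule ccontr)
  assume "\<not> ?thesis"
  then have tail: "(\<Sum>j\<in>{a..<b}. d j) \<le> r" if "a < b" for b
    using that by auto
  have "(\<Sum>j\<le>m. d j) \<le> (\<Sum>j<a. d j) + r" for m
  proof -
    have "(\<Sum>j\<le>m. d j) \<le> (\<Sum>j<max (Suc a) (Suc m). d j)"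
      using nonneg by (intro sum_mono2) auto
    also have "\<dots> = (\<Sum>j<a. d j) + (\<Sum>j\<in>{a..<max (Suc a) (Suc m)}. d j)"
      by (simp add: lessThan_atLeast0 sum.atLeastLessThan_concat)
    finally show ?thesis using tail[of "max (Suc a) (Suc m)"] by linarith
  qed
  then have "summable d"
    by (rule bounded_imp_summable[OF nonneg])
  with \<open>\<not> summable d\<close> show False ..
qed

lemma not_summable_blocks:
  fixes d :: "nat \<Rightarrow> real"
  assumes "\<And>j. d j \<ge> 0" and "\<not> summable d"
  obtains A where "strict_mono A" "A 0 = 0" "\<And>n. r n \<le> (\<Sum>j\<in>{A n..<A (Suc n)}. d j)"
proof -
  have "\<exists>A. \<forall>n. (n = 0 \<longrightarrow> A n = 0) \<and> A n < A (Suc n) \<and> r n \<le> (\<Sum>j\<in>{A n..<A (Suc n)}. d j)"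
    using not_summable_tail_sums_unbounded[OF assms] by (intro dependent_nat_choice) auto
  then show ?thesis
    using that strict_monoI_Suc by metis
qed

definition block_index :: "(nat \<Rightarrow> nat) \<Rightarrow> nat \<Rightarrow> nat" where
  "block_index A j = (LEAST n. j < A (Suc n))"

context
  fixes A :: "nat \<Rightarrow> nat"
  assumes mono: "strict_mono A" and start: "A 0 = 0"
begin

lemma block_index_bounds: "A (block_index A j) \<le> j \<and> j < A (Suc (block_index A j))"
proof
  have "j < A (Suc j)"
    using seq_suble[OF mono, of "Suc j"] by simp
  then show "j < A (Suc (block_index A j))"
    unfolding block_index_def by (rule LeastI)
  show "A (block_index A j) \<le> j"
  proof (cases "block_index A j")
    case (Suc m)
    then have "\<not> j < A (Suc m)"
      unfolding block_index_def by (metis lessI not_less_Least)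
    with Suc show ?thesis by simp
  qed (simp add: start)
qed

lemma block_index_eq:
  assumes "A n \<le> j" "j < A (Suc n)"
  shows "block_index A j = n"
proof -
  have "n < Suc (block_index A j)" "block_index A j < Suc n"
    using assms block_index_bounds[of j] strict_mono_less[OF mono] by (meson le_less_trans)+
  then show ?thesis by simp
qed

lemma filterlim_block_index: "filterlim (block_index A) at_top sequentially"
  unfolding filterlim_at_top eventually_sequentially
proof (intro allI exI impI)
  fix n j assume "A n \<le> j"
  then have "A n < A (Suc (block_index A j))"
    using block_index_bounds[of j] by linarith
  then show "n \<le> block_index A j"
    using strict_mono_less[OF mono] by simp
qed

end

locale disc_blocks =
  fixes z :: "nat \<Rightarrow> complex" and A :: "nat \<Rightarrow> nat"
  assumes in_disc: "\<And>j. z j \<in> ball 0 1" and distinct: "inj z"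
    and mono: "strict_mono A" and start: "A 0 = 0"
begin

definition block :: "nat \<Rightarrow> complex set" where
  "block n = z ` {A n..<A (Suc n)}"

text \<open>The weight of \<open>z j\<close> is its separation from the rest of its block \<open>n\<close>, shared out
  among the block and damped by \<open>n + 1\<close>: a bound \<open>norm (f (z j)) \<le> C * weight j\<close> then keeps the
  interpolation error on block \<open>n\<close> below \<open>C / (n + 1)\<close>.\<close>

definition weight :: "nat \<Rightarrow> real" where
  "weight j = (let n = block_index A j in
     Blaschke_modulus (block n - {z j}) (z j) / (real (Suc n) * card (block n)))"

lemma finite_block: "finite (block n)"
  by (simp add: block_def)

lemma block_subset_disc: "block n \<subseteq> ball 0 1"
  using in_disc by (auto simp: block_def)

lemma card_block_pos: "card (block n) > 0"
  using strict_monoD[OF mono, of n "Suc n"] by (simp add: block_def card_gt_0_iff)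

lemma in_block_iff: "z j \<in> block n \<longleftrightarrow> block_index A j = n"
proof
  assume "z j \<in> block n"
  then obtain i where "A n \<le> i" "i < A (Suc n)" "z j = z i"
    by (auto simp: block_def)
  then show "block_index A j = n"
    using block_index_eq[OF mono start] injD[OF distinct] by metis
next
  assume "block_index A j = n"
  then show "z j \<in> block n"
    using block_index_bounds[OF mono start, of j] by (auto simp: block_def)
qed

lemma weight_pos: "weight j > 0"
proof -
  have "Blaschke_modulus (block n - {z j}) (z j) > 0" for n
    using block_subset_disc[of n] finite_block[of n] by (intro Blaschke_modulus_pos[OF _ _ in_disc]) auto
  then show ?thesis
    using card_block_pos by (simp add: weight_def Let_def)
qed

lemma weight_le: "weight j \<le> inverse (real (Suc (block_index A j)))"
  unfolding weight_def Let_def inverse_eq_divide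
  using Blaschke_modulus_le_1[OF _ in_disc, of "block (block_index A j) - {z j}" j]
    block_subset_disc[of "block_index A j"] card_block_pos[of "block_index A j"]
  by (intro frac_le) auto

lemma weight_tendsto_0: "weight \<longlonglongrightarrow> 0"
  by (rule real_tendsto_sandwich[OF always_eventually always_eventually tendsto_const
    filterlim_compose[OF LIMSEQ_inverse_real_of_nat filterlim_block_index[OF mono start]]])
    (use weight_le weight_pos less_imp_le in auto)

lemma interpolation_sum_block_le:
  assumes small: "\<And>j. norm (f (z j)) \<le> C * weight j"
  shows "(\<Sum>a\<in>block n. norm (f a) / Blaschke_modulus (block n - {a}) a) \<le> C * inverse (real (Suc n))"
  unfolding divide_inverse[symmetric]
proof (rule interpolation_sum_le_if_bounded_by_weights)
  fix a assume "a \<in> block n"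
  then obtain j where "a = z j" "block_index A j = n"
    using in_block_iff by (auto simp: block_def)
  then show "norm (f a) \<le> C * (Blaschke_modulus (block n - {a}) a / (real (Suc n) * card (block n)))"
    using small[of j] by (simp add: weight_def)
qed (use card_block_pos[of n] in \<open>auto simp: finite_block block_subset_disc\<close>)

lemma eq_0_if_bounded_by_weight:
  assumes mass: "\<And>n. real n \<le> (\<Sum>j\<in>{A n..<A (Suc n)}. 1 - norm (z j))"
    and holf: "f holomorphic_on ball 0 1" and bound: "\<And>u. u \<in> ball 0 1 \<Longrightarrow> norm (f u) \<le> M"
    and small: "\<And>j. norm (f (z j)) \<le> C * weight j" and w: "w \<in> ball 0 1"
  shows "f w = 0"
proof (rule bounded_holomorphic_eq_0_if_small_on_sets[OF finite_block block_subset_disc _ _ holf bound w])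
  have "(\<Sum>a\<in>block n. 1 - norm a) = (\<Sum>j\<in>{A n..<A (Suc n)}. 1 - norm (z j))" for n
    unfolding block_def using distinct by (simp add: sum.reindex inj_on_subset)
  then show "filterlim (\<lambda>n. \<Sum>a\<in>block n. 1 - norm a) at_top sequentially"
    using mass by (intro filterlim_at_top_mono[OF filterlim_real_sequentially always_eventually]) simp
  show "(\<lambda>n. \<Sum>a\<in>block n. norm (f a) / Blaschke_modulus (block n - {a}) a) \<longlonglongrightarrow> 0"
    by (rule real_tendsto_sandwich[OF always_eventually always_eventually tendsto_const
      tendsto_mult_right_zero[OF LIMSEQ_inverse_real_of_nat]])
      (use interpolation_sum_block_le[OF small] in \<open>auto intro!: sum_nonneg simp: Blaschke_modulus_nonneg\<close>)
qed

end

theorem theorem1p4: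
  fixes z :: "nat \<Rightarrow> complex"
  assumes in_disc: "\<And>j. z j \<in> ball 0 1"
    and distinct: "inj z"
    and diverge: "\<not> summable (\<lambda>j. 1 - norm (z j))"
  shows "\<exists>\<eta> :: nat \<Rightarrow> real. (\<forall>j. \<eta> j > 0) \<and> \<eta> \<longlonglongrightarrow> 0 \<and>
    (\<forall>f :: complex \<Rightarrow> complex.
       f holomorphic_on ball 0 1 \<and> bounded (f ` ball 0 1) \<and> (\<exists>w\<in>ball 0 1. f w \<noteq> 0) \<longrightarrow>
       limsup (\<lambda>j. ereal (norm (f (z j)) / \<eta> j)) = \<infinity>)"
proof -
  have "0 \<le> 1 - norm (z j)" for j
    using in_disc[of j] by simp
  then obtain A where mono: "strict_mono A" and start: "A 0 = 0"
    and mass: "\<And>n. real n \<le> (\<Sum>j\<in>{A n..<A (Suc n)}. 1 - norm (z j))"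
    using not_summable_blocks[where r = real, OF _ diverge] by blast
  interpret disc_blocks z A
    using in_disc distinct mono start by unfold_locales
  show ?thesis
  proof (intro exI conjI allI impI)
    fix f :: "complex \<Rightarrow> complex"
    assume f: "f holomorphic_on ball 0 1 \<and> bounded (f ` ball 0 1) \<and> (\<exists>w\<in>ball 0 1. f w \<noteq> 0)"
    then obtain w M where w: "w \<in> ball 0 1" "f w \<noteq> 0" and bound: "\<And>u. u \<in> ball 0 1 \<Longrightarrow> norm (f u) \<le> M"
      unfolding bounded_iff by blast
    show "limsup (\<lambda>j. ereal (norm (f (z j)) / weight j)) = \<infinity>"
    proof (rule ccontr)
      assume "limsup (\<lambda>j. ereal (norm (f (z j)) / weight j)) \<noteq> \<infinity>"
      then obtain C where "\<And>j. norm (f (z j)) / weight j \<le> C"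
        using limsup_finite_then_bounded[of "\<lambda>j. norm (f (z j)) / weight j"]
        by (auto simp: less_top[symmetric])
      then have small: "norm (f (z j)) \<le> C * weight j" for j
        using weight_pos[of j] by (simp add: divide_le_eq)
      have "f w = 0"
        using f by (intro eq_0_if_bounded_by_weight[where f = f, OF mass _ bound small w(1)]) blast
      with w(2) show False ..
    qed
  qed (use weight_pos weight_tendsto_0 in auto)
qed

end
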